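(* Let $k\ge\ell\ge1$ be integers with $k+\ell\ge6$ and let $G$ be a finite digraph. For every $v\in V(G)$, $$s(v)\le\frac{1}{m+1}\left(\lambda_0\,\rho(v)^m+\lambda_1\,\rho(v)(1-\rho(v))^{m-1}\right).$$
   Context: Put $m=k+\ell$, $\lambda_0=k^k\ell^\ell/m^m$, $\lambda_1=k^k\ell(\ell-1)^{\ell-1}/(m-1)^{m-1}$ (with $0^0=1$). Digraphs are finite, without loops; $xy$ denotes an arc from $x$ to $y$; two vertices are adjacent if at least one of $xy,yx$ is an arc. The oriented star $S_{k,\ell}$ has a center $c$, a set $O$ of $k$ out-leaves and a set $I$ of $\ell$ in-leaves; its arcs are exactly $co$ ($o\in O$) and $ic$ ($i\in I$). For a digraph $G$ on $n$ vertices, let $\phi$ be a uniformly random map from $V(S_{k,\ell})$ to $V(G)$ (all $n^{m+1}$ maps equally likely), and let $\mathcal S$ be the set of maps $\phi$ that are isomorphisms from $S_{k,\ell}$ onto $G[\mathrm{Im}\,\phi]$ (in particular injective). $s(v)=\Pr[\phi\in\mathcal S\mid v\in\mathrm{Im}\,\phi]$. $\rho(v)$ is the number of vertices adjacent to $v$, divided by $n$. *)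

theory Defs
  imports Complex_Main "HOL-Library.FuncSet"
begin

definition digraph :: "'a set \<Rightarrow> ('a \<Rightarrow> 'a \<Rightarrow> bool) \<Rightarrow> bool" where
  "digraph V Arc \<longleftrightarrow> finite V \<and> (\<forall>x y. Arc x y \<longrightarrow> x \<in> V \<and> y \<in> V) \<and> (\<forall>x. \<not> Arc x x)"

text \<open>The oriented star S_{k,l} on vertex set {0..k+l}: centre 0, out-leaves 1..k,
in-leaves k+1..k+l.\<close>
definition star_arc :: "nat \<Rightarrow> nat \<Rightarrow> nat \<Rightarrow> nat \<Rightarrow> bool" where
  "star_arc k l x y \<longleftrightarrow> (x = 0 \<and> 1 \<le> y \<and> y \<le> k) \<or> (y = 0 \<and> k + 1 \<le> x \<and> x \<le> k + l)"

definition star_verts :: "nat \<Rightarrow> nat \<Rightarrow> nat set" where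
  "star_verts k l = {0..k + l}"

definition star_maps :: "nat \<Rightarrow> nat \<Rightarrow> 'a set \<Rightarrow> (nat \<Rightarrow> 'a) set" where
  "star_maps k l V = star_verts k l \<rightarrow>\<^sub>E V"

text \<open>phi is an isomorphism from S_{k,l} onto the induced subdigraph G[Im phi].\<close>
definition is_star_copy :: "('a \<Rightarrow> 'a \<Rightarrow> bool) \<Rightarrow> nat \<Rightarrow> nat \<Rightarrow> (nat \<Rightarrow> 'a) \<Rightarrow> bool" where
  "is_star_copy Arc k l \<phi> \<longleftrightarrow> inj_on \<phi> (star_verts k l) \<and>
     (\<forall>x\<in>star_verts k l. \<forall>y\<in>star_verts k l. Arc (\<phi> x) (\<phi> y) \<longleftrightarrow> star_arc k l x y)"

text \<open>s(v) = Pr[phi in S | v in Im phi] for phi uniform on all maps.\<close>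
definition s_val :: "'a set \<Rightarrow> ('a \<Rightarrow> 'a \<Rightarrow> bool) \<Rightarrow> nat \<Rightarrow> nat \<Rightarrow> 'a \<Rightarrow> real" where
  "s_val V Arc k l v =
     real (card {\<phi> \<in> star_maps k l V. is_star_copy Arc k l \<phi> \<and> v \<in> \<phi> ` star_verts k l})
     / real (card {\<phi> \<in> star_maps k l V. v \<in> \<phi> ` star_verts k l})"

definition rho :: "'a set \<Rightarrow> ('a \<Rightarrow> 'a \<Rightarrow> bool) \<Rightarrow> 'a \<Rightarrow> real" where
  "rho V Arc v = real (card {u \<in> V. Arc u v \<or> Arc v u}) / real (card V)"

text \<open>lambda_0 and lambda_1 (nat powers, so 0^0 = 1).\<close>
definition lambda0 :: "nat \<Rightarrow> nat \<Rightarrow> real" where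
  "lambda0 k l = real k ^ k * real l ^ l / real (k + l) ^ (k + l)"

definition lambda1 :: "nat \<Rightarrow> nat \<Rightarrow> real" where
  "lambda1 k l = real k ^ k * real l * real (l - 1) ^ (l - 1) / real (k + l - 1) ^ (k + l - 1)"

end

theory Submission
  imports Defs "HOL-Analysis.Convex"
begin

text \<open>
  Split the copies of \<open>S\<^sub>k\<^sub>,\<^sub>l\<close> through \<open>v\<close> by the vertex of the star mapped to \<open>v\<close>.
  If \<open>v\<close> is the centre, the out-leaves are injected into the vertices that \<open>v\<close> only points to
  and the in-leaves into those that only point to \<open>v\<close>; AM-GM applied to the \<open>m\<close> factors of the
  two falling factorials bounds their number by \<open>\<lambda>\<^sub>0 (d - 1)\<^sup>m\<close>, where \<open>d = \<rho>(v) n\<close>.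
  If \<open>v\<close> is a leaf, the centre is a neighbour of \<open>v\<close> and the other \<open>m - 1\<close> leaves are
  non-neighbours of \<open>v\<close>, which gives \<open>\<lambda>\<^sub>1 d (n - d - 2)\<^sup>m\<^sup>-\<^sup>1\<close> after comparing the
  out-leaf and in-leaf coefficients through the monotonicity of \<open>(1 - 1/x)\<^sup>x\<^sup>-\<^sup>1\<close>.
  At least \<open>(m + 1)(n - 1)\<^sup>m\<close> maps hit \<open>v\<close> exactly once, and the two estimates rescale to
  the stated bound in \<open>\<rho>(v)\<close>.
\<close>

section \<open>Falling factorials and AM-GM\<close>

definition falling :: "nat \<Rightarrow> nat \<Rightarrow> nat" where
  "falling n k = (\<Prod>i<k. n - i)"

lemma card_inj_PiE_falling:
  "finite A \<Longrightarrow> finite C \<Longrightarrow> card {f \<in> A \<rightarrow>\<^sub>E C. inj_on f A} = falling (card C) (card A)"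
  using card_inj_on_subset_funcset[of A C A] by (simp add: falling_def lessThan_atLeast0)

lemma of_nat_falling: "k \<le> n \<Longrightarrow> real (falling n k) = (\<Prod>i<k. real n - real i)"
  by (simp add: falling_def of_nat_diff)

lemma card_le_falling_mult_falling:
  assumes fin: "finite X" "finite Y" "finite P" "finite Q"
    and outside: "\<And>\<phi> z. \<phi> \<in> F \<Longrightarrow> z \<notin> X \<union> Y \<Longrightarrow> \<phi> z = h z"
    and inj: "\<And>\<phi>. \<phi> \<in> F \<Longrightarrow> inj_on \<phi> (X \<union> Y)"
    and maps: "\<And>\<phi>. \<phi> \<in> F \<Longrightarrow> \<phi> ` X \<subseteq> P" "\<And>\<phi>. \<phi> \<in> F \<Longrightarrow> \<phi> ` Y \<subseteq> Q"
  shows "card F \<le> falling (card P) (card X) * falling (card Q) (card Y)"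
proof -
  let ?r = "\<lambda>\<phi>. (restrict \<phi> X, restrict \<phi> Y)"
  let ?B = "{g \<in> X \<rightarrow>\<^sub>E P. inj_on g X} \<times> {g \<in> Y \<rightarrow>\<^sub>E Q. inj_on g Y}"
  have "inj_on ?r F"
  proof (rule inj_onI, rule ext)
    fix \<phi> \<psi> z
    assume "\<phi> \<in> F" "\<psi> \<in> F" "?r \<phi> = ?r \<psi>"
    then show "\<phi> z = \<psi> z"
      using outside[of \<phi> z] outside[of \<psi> z] by (cases "z \<in> X"; cases "z \<in> Y") (auto dest!: fun_cong[of _ _ z])
  qed
  moreover have "?r ` F \<subseteq> ?B"
    using inj maps by (fastforce simp: inj_on_def)
  moreover have "finite ?B"
    using fin by (simp add: finite_PiE)
  ultimately have "card F \<le> card ?B"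
    by (rule card_inj_on_le)
  also have "\<dots> = falling (card P) (card X) * falling (card Q) (card Y)"
    using fin by (simp add: card_cartesian_product card_inj_PiE_falling)
  finally show ?thesis .
qed

lemma prod_le_mean_power:
  fixes x :: "'i \<Rightarrow> real"
  assumes "finite S" and nonneg: "\<And>i. i \<in> S \<Longrightarrow> 0 \<le> x i"
  shows "(\<Prod>i\<in>S. x i) \<le> ((\<Sum>i\<in>S. x i) / card S) ^ card S"
proof (cases "S = {}")
  case False
  have "(\<Prod>i\<in>S. x i) = ((\<Prod>i\<in>S. x i) powr (1 / card S)) ^ card S"
  proof (cases "(\<Prod>i\<in>S. x i) = 0")
    case True
    then show ?thesis
      using \<open>finite S\<close> False by (simp only: True) (simp add: card_gt_0_iff)
  qed (use prod_nonneg[of S x] nonneg \<open>finite S\<close> False in \<open>simp add: powr_power card_gt_0_iff\<close>)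
  also have "\<dots> \<le> ((\<Sum>i\<in>S. x i) / card S) ^ card S"
    using arith_geom_mean[OF \<open>finite S\<close> False nonneg]
    by (intro power_mono) (auto simp: sum_divide_distrib)
  finally show ?thesis .
qed simp

lemma sum_of_nat_lessThan: "(\<Sum>i<k. real i) = real k * (real k - 1) / 2"
  by (induction k) (auto simp: field_simps)

lemma mean_of_falling_le: "0 \<le> p \<Longrightarrow> (\<Sum>i<k. (p - real i) / real k) \<le> p - (real k - 1) / 2"
  by (cases "k = 0") (simp_all add: sum_divide_distrib[symmetric] sum_subtractf sum_of_nat_lessThan field_simps)

definition star_coeff :: "nat \<Rightarrow> nat \<Rightarrow> real" where
  "star_coeff a b = real a ^ a * real b ^ b / real (a + b) ^ (a + b)"

lemma star_coeff_nonneg: "0 \<le> star_coeff a b"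
  by (simp add: star_coeff_def)

lemma falling_mult_falling_le:
  assumes "4 \<le> a + b" "0 \<le> T" "real p + real q - 1 \<le> T"
  shows "real (falling p a * falling q b) \<le> star_coeff a b * T ^ (a + b)"
  \<comment> \<open>The mean of the \<open>a + b\<close> factors is at most \<open>(p + q - (a + b - 2)/2)/(a + b)\<close>.\<close>
proof (cases "p < a \<or> q < b")
  case True
  then have "falling p a * falling q b = 0"
    by (auto simp: falling_def intro: prod_zero)
  then show ?thesis
    using assms(2) star_coeff_nonneg by (metis mult_nonneg_nonneg of_nat_0 zero_le_power)
next
  case False
  define x where "x = case_sum (\<lambda>i. (real p - real i) / real a) (\<lambda>j. (real q - real j) / real b)"
  define S where "S = {..<a} <+> {..<b}"
  have S: "finite S" "card S = a + b"
    by (simp_all add: S_def card_Plus)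
  have x_nonneg: "0 \<le> x i" if "i \<in> S" for i
    using that False by (auto simp: S_def x_def)
  have prod_x: "(\<Prod>i\<in>S. x i) = real (falling p a) / real a ^ a * (real (falling q b) / real b ^ b)"
    using False by (simp add: S_def x_def prod.Plus o_def prod_dividef of_nat_falling)
  have "(\<Sum>i\<in>S. x i) \<le> (real p - (real a - 1) / 2) + (real q - (real b - 1) / 2)"
    unfolding S_def x_def by (simp add: sum.Plus o_def add_mono mean_of_falling_le)
  also have "\<dots> \<le> T"
    using assms(3) of_nat_mono[OF assms(1), where 'a = real] by (simp add: field_simps)
  finally have sum_x: "(\<Sum>i\<in>S. x i) \<le> T" .
  have "(\<Prod>i\<in>S. x i) \<le> ((\<Sum>i\<in>S. x i) / card S) ^ card S"
    using S(1) x_nonneg by (rule prod_le_mean_power)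
  also have "\<dots> \<le> (T / (a + b)) ^ (a + b)"
    using S(2) sum_x sum_nonneg[of S x] x_nonneg by (auto intro!: power_mono divide_right_mono)
  finally have "(\<Prod>i\<in>S. x i) \<le> (T / (a + b)) ^ (a + b)" .
  then have "real a ^ a * real b ^ b * (\<Prod>i\<in>S. x i) \<le> real a ^ a * real b ^ b * (T / (a + b)) ^ (a + b)"
    by (simp add: mult_left_mono)
  moreover have "real a ^ a * real b ^ b * (\<Prod>i\<in>S. x i) = real (falling p a * falling q b)"
    unfolding prod_x by (cases "a = 0"; cases "b = 0") auto
  ultimately show ?thesis
    by (simp add: star_coeff_def power_divide)
qed

section \<open>Comparing the coefficients\<close>

text \<open>Bernoulli's inequality applied to \<open>(1 - 1/n\<^sup>2)\<^sup>n\<^sup>-\<^sup>1\<close>.\<close>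
lemma one_minus_inverse_power_Suc_le: "(1 - 1 / real (Suc n)) ^ n \<le> (1 - 1 / real n) ^ (n - 1)"
proof (cases "n = 0")
  case False
  define a where "a = 1 - 1 / real (Suc n)"
  have "0 < real n"
    using False by simp
  then have a: "0 \<le> a" "1 - 1 / real n = a * (1 - 1 / real n ^ 2)"
    by (simp_all add: a_def divide_simps power2_eq_square) algebra
  have "a ^ n = a ^ (n - 1) * a"
    using False by (simp add: power_Suc2[symmetric])
  also have "\<dots> \<le> a ^ (n - 1) * (1 + real (n - 1) * (- 1 / real n ^ 2))"
  proof (intro mult_left_mono)
    have "real n ^ 3 \<le> (real n ^ 2 - real n + 1) * (real n + 1)"
      by (simp add: algebra_simps power2_eq_square power3_eq_cube)
    then show "a \<le> 1 + real (n - 1) * (- 1 / real n ^ 2)"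
      using False by (simp add: a_def of_nat_diff field_simps power2_eq_square power3_eq_cube)
  qed (use a in simp)
  also have "\<dots> \<le> a ^ (n - 1) * (1 - 1 / real n ^ 2) ^ (n - 1)"
    using Bernoulli_inequality[of "- 1 / real n ^ 2" "n - 1"] a(1) False
    by (intro mult_left_mono) (simp_all add: field_simps)
  also have "\<dots> = (1 - 1 / real n) ^ (n - 1)"
    by (simp add: a(2) power_mult_distrib)
  finally show ?thesis
    by (simp add: a_def)
qed simp

lemma one_minus_inverse_power_antimono:
  "l \<le> k \<Longrightarrow> (1 - 1 / real k) ^ (k - 1) \<le> (1 - 1 / real l) ^ (l - 1)"
  using lift_Suc_antimono_le[of "\<lambda>n. (1 - 1 / real n) ^ (n - 1)"] one_minus_inverse_power_Suc_le
  by (metis diff_Suc_1)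

lemma pred_power_pred: "1 \<le> n \<Longrightarrow> real (n - 1) ^ (n - 1) = real n ^ (n - 1) * (1 - 1 / real n) ^ (n - 1)"
  by (simp add: of_nat_diff power_mult_distrib[symmetric] field_simps)

lemma star_coeff_shift_le:
  assumes "1 \<le> l" "l \<le> k"
  shows "real k * star_coeff (k - 1) l \<le> real l * star_coeff k (l - 1)"
proof -
  have "real k * (real (k - 1) ^ (k - 1) * real l ^ l)
      = real k ^ k * real l ^ l * (1 - 1 / real k) ^ (k - 1)"
    using assms pred_power_pred[of k] by (simp add: power_eq_if)
  also have "\<dots> \<le> real k ^ k * real l ^ l * (1 - 1 / real l) ^ (l - 1)"
    using assms by (intro mult_left_mono one_minus_inverse_power_antimono) simp_all
  also have "\<dots> = real l * (real k ^ k * real (l - 1) ^ (l - 1))"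
    using assms pred_power_pred[of l] by (simp add: power_eq_if)
  finally show ?thesis
    using assms by (simp add: star_coeff_def divide_right_mono mult.assoc)
qed

lemma lambda0_eq_star_coeff: "lambda0 k l = star_coeff k l"
  by (simp add: lambda0_def star_coeff_def)

lemma lambda1_eq_star_coeff: "1 \<le> l \<Longrightarrow> lambda1 k l = real l * star_coeff k (l - 1)"
  by (simp add: lambda1_def star_coeff_def)

section \<open>Rescaling to the density\<close>

lemma pos_part_pred_power_le:
  fixes n d :: real
  assumes "1 \<le> n" "0 \<le> d" "d \<le> n"
  shows "n ^ m * max 0 (d - 1) ^ m \<le> (n - 1) ^ m * d ^ m"
proof -
  have "n * max 0 (d - 1) \<le> (n - 1) * d"
    using assms mult_left_mono[of 1 n d] by (cases "1 \<le> d") (auto simp: algebra_simps)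
  then have "(n * max 0 (d - 1)) ^ m \<le> ((n - 1) * d) ^ m"
    using assms by (intro power_mono) auto
  then show ?thesis
    by (simp add: power_mult_distrib)
qed

lemma mult_power_le_pred_power:
  fixes n :: real
  assumes "2 \<le> n" "1 \<le> j"
  shows "n * (n - 2) ^ j \<le> (n - 1) ^ (j + 1)"
proof -
  have "n * (n - 2) ^ j = n * (n - 2) * (n - 2) ^ (j - 1)"
    using assms(2) by (simp add: power_eq_if)
  also have "\<dots> \<le> (n - 1) ^ 2 * (n - 1) ^ (j - 1)"
    using assms(1) zero_le_power2[of "n - 1"]
    by (intro mult_mono power_mono) (auto simp: power2_eq_square algebra_simps)
  also have "\<dots> = (n - 1) ^ (j + 1)"
    using assms(2) by (simp add: power_add[symmetric])
  finally show ?thesis .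
qed

lemma gap_power_le:
  fixes n d :: real
  assumes "0 \<le> d" "d \<le> n - 1" "1 \<le> j"
  shows "n ^ (j + 1) * max 0 (n - d - 2) ^ j \<le> (n - 1) ^ (j + 1) * (n - d) ^ j"
proof (cases "n - d - 2 \<le> 0")
  case True
  then show ?thesis
    using assms by (auto simp: zero_power intro!: mult_nonneg_nonneg)
next
  case False
  then have "n * (n - d - 2) \<le> (n - 2) * (n - d)"
    using assms(1) by (simp add: algebra_simps)
  then have "(n * (n - d - 2)) ^ j \<le> ((n - 2) * (n - d)) ^ j"
    using False assms by (intro power_mono) auto
  then have "n * (n * (n - d - 2)) ^ j \<le> n * (n - 2) ^ j * (n - d) ^ j"
    using False assms by (simp add: mult_left_mono power_mult_distrib)
  also have "\<dots> \<le> (n - 1) ^ (j + 1) * (n - d) ^ j"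
    using False assms by (intro mult_right_mono mult_power_le_pred_power) auto
  finally show ?thesis
    using False by (simp add: power_mult_distrib)
qed

lemma ratio_le_star_density:
  fixes n d num den L0 L1 :: real and m :: nat
  assumes "1 \<le> n" "0 \<le> d" "d \<le> n - 1" "2 \<le> m" "0 \<le> L0" "0 \<le> L1" "0 \<le> num"
    and den: "real (m + 1) * (n - 1) ^ m \<le> den"
    and num: "num \<le> L0 * max 0 (d - 1) ^ m + d * L1 * max 0 (n - d - 2) ^ (m - 1)"
  shows "num / den \<le> 1 / real (m + 1) * (L0 * (d / n) ^ m + L1 * (d / n) * (1 - d / n) ^ (m - 1))"
proof -
  define X where "X = L0 * d ^ m + L1 * d * (n - d) ^ (m - 1)"
  have m: "m = (m - 1) + 1"
    using assms(4) by simp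
  have rhs: "1 / real (m + 1) * (L0 * (d / n) ^ m + L1 * (d / n) * (1 - d / n) ^ (m - 1)) = X / (real (m + 1) * n ^ m)"
  proof -
    have "n ^ m = n * n ^ (m - 1)" "1 - d / n = (n - d) / n"
      using assms(1,4) by (simp_all add: power_eq_if field_simps)
    then show ?thesis
      using assms(1) by (simp add: X_def power_divide field_simps)
  qed
  show ?thesis
  proof (cases "num = 0")
    case True
    then show ?thesis
      unfolding rhs X_def using assms by simp
  next
    case False
    have "1 < n"
    proof (rule ccontr)
      assume "\<not> 1 < n"
      then have "d = 0" "n - d - 2 < 0"
        using assms by auto
      then show False
        using num False \<open>0 \<le> num\<close> assms(4) by (simp add: zero_power)
    qed
    have "num * n ^ m \<le> (L0 * (n ^ m * max 0 (d - 1) ^ m) + d * L1 * (n ^ m * max 0 (n - d - 2) ^ (m - 1)))"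
      using mult_right_mono[OF num, of "n ^ m"] assms(1) by (simp add: algebra_simps)
    also have "\<dots> \<le> L0 * ((n - 1) ^ m * d ^ m) + d * L1 * ((n - 1) ^ m * (n - d) ^ (m - 1))"
      using assms gap_power_le[of d n "m - 1"] pos_part_pred_power_le[of n d m]
      by (intro add_mono mult_left_mono) (simp_all flip: m)
    also have "\<dots> = X * (n - 1) ^ m"
      by (simp add: X_def algebra_simps)
    finally have key: "num * n ^ m \<le> X * (n - 1) ^ m" .
    have "0 < real (m + 1) * (n - 1) ^ m"
      using \<open>1 < n\<close> by simp
    then have "num / den \<le> num / (real (m + 1) * (n - 1) ^ m)"
      using den \<open>0 \<le> num\<close> by (intro divide_left_mono) (auto intro: mult_pos_pos)
    also have "\<dots> \<le> X / (real (m + 1) * n ^ m)"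
      using key \<open>1 < n\<close> by (simp add: divide_simps mult.commute mult.left_commute)
    finally show ?thesis
      unfolding rhs .
  qed
qed

section \<open>Counting copies of the star\<close>

definition nbrs :: "'a set \<Rightarrow> ('a \<Rightarrow> 'a \<Rightarrow> bool) \<Rightarrow> 'a \<Rightarrow> 'a set" where
  "nbrs V Arc u = {w \<in> V. Arc w u \<or> Arc u w}"

definition non_nbrs :: "'a set \<Rightarrow> ('a \<Rightarrow> 'a \<Rightarrow> bool) \<Rightarrow> 'a \<Rightarrow> 'a set" where
  "non_nbrs V Arc u = {w \<in> V. \<not> Arc w u \<and> \<not> Arc u w \<and> w \<noteq> u}"

definition out_only_nbrs :: "'a set \<Rightarrow> ('a \<Rightarrow> 'a \<Rightarrow> bool) \<Rightarrow> 'a \<Rightarrow> 'a set" where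
  "out_only_nbrs V Arc u = {w \<in> V. Arc u w \<and> \<not> Arc w u}"

definition in_only_nbrs :: "'a set \<Rightarrow> ('a \<Rightarrow> 'a \<Rightarrow> bool) \<Rightarrow> 'a \<Rightarrow> 'a set" where
  "in_only_nbrs V Arc u = {w \<in> V. Arc w u \<and> \<not> Arc u w}"

lemma card_out_only_plus_in_only_le:
  assumes "finite V"
  shows "card (out_only_nbrs V Arc u) + card (in_only_nbrs V Arc u) \<le> card (nbrs V Arc u)"
proof -
  have "card (out_only_nbrs V Arc u) + card (in_only_nbrs V Arc u)
      = card (out_only_nbrs V Arc u \<union> in_only_nbrs V Arc u)"
    using assms by (intro card_Un_disjoint[symmetric]) (auto simp: out_only_nbrs_def in_only_nbrs_def)
  also have "\<dots> \<le> card (nbrs V Arc u)"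
    using assms by (intro card_mono) (auto simp: out_only_nbrs_def in_only_nbrs_def nbrs_def)
  finally show ?thesis .
qed

lemma card_non_nbrs_plus_nbrs:
  assumes "digraph V Arc" "v \<in> V"
  shows "card (non_nbrs V Arc v) + card (nbrs V Arc v) + 1 = card V"
proof -
  have fin: "finite V" and "v \<notin> nbrs V Arc v"
    using assms(1) by (auto simp: digraph_def nbrs_def)
  have "V = non_nbrs V Arc v \<union> insert v (nbrs V Arc v)"
    using assms(2) by (auto simp: non_nbrs_def nbrs_def)
  moreover have "non_nbrs V Arc v \<inter> insert v (nbrs V Arc v) = {}"
    by (auto simp: non_nbrs_def nbrs_def)
  ultimately have "card V = card (non_nbrs V Arc v) + card (insert v (nbrs V Arc v))"
    using fin by (metis card_Un_disjoint finite_Un)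
  then show ?thesis
    using fin \<open>v \<notin> nbrs V Arc v\<close> by (simp add: nbrs_def)
qed

lemma star_maps_in_verts: "\<phi> \<in> star_maps k l V \<Longrightarrow> z \<le> k + l \<Longrightarrow> \<phi> z \<in> V"
  by (auto simp: star_maps_def star_verts_def)

lemma star_maps_undefined: "\<phi> \<in> star_maps k l V \<Longrightarrow> k + l < z \<Longrightarrow> \<phi> z = undefined"
  by (auto simp: star_maps_def star_verts_def PiE_def extensional_def)

lemma finite_star_maps: "finite V \<Longrightarrow> finite (star_maps k l V)"
  by (simp add: star_maps_def star_verts_def finite_PiE)

lemma star_copy_arc_iff:
  "is_star_copy Arc k l \<phi> \<Longrightarrow> a \<le> k + l \<Longrightarrow> b \<le> k + l \<Longrightarrow> Arc (\<phi> a) (\<phi> b) \<longleftrightarrow> star_arc k l a b"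
  by (simp add: is_star_copy_def star_verts_def)

lemma star_copy_inj: "is_star_copy Arc k l \<phi> \<Longrightarrow> inj_on \<phi> {0..k + l}"
  by (simp add: is_star_copy_def star_verts_def)

lemma star_copy_out_leaf:
  assumes "\<phi> \<in> star_maps k l V" "is_star_copy Arc k l \<phi>" "y \<in> {1..k}"
  shows "\<phi> y \<in> out_only_nbrs V Arc (\<phi> 0)"
  using assms star_copy_arc_iff[OF assms(2), of 0 y] star_copy_arc_iff[OF assms(2), of y 0]
  by (simp add: out_only_nbrs_def star_maps_in_verts star_arc_def)

lemma star_copy_in_leaf:
  assumes "\<phi> \<in> star_maps k l V" "is_star_copy Arc k l \<phi>" "y \<in> {k+1..k+l}"
  shows "\<phi> y \<in> in_only_nbrs V Arc (\<phi> 0)"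
  using assms star_copy_arc_iff[OF assms(2), of 0 y] star_copy_arc_iff[OF assms(2), of y 0]
  by (simp add: in_only_nbrs_def star_maps_in_verts star_arc_def)

lemma star_copy_leaf_non_nbr:
  assumes "\<phi> \<in> star_maps k l V" "is_star_copy Arc k l \<phi>" "x \<in> {1..k+l}" "y \<in> {1..k+l}" "x \<noteq> y"
  shows "\<phi> y \<in> non_nbrs V Arc (\<phi> x)"
  using assms star_copy_arc_iff[OF assms(2), of x y] star_copy_arc_iff[OF assms(2), of y x]
    inj_onD[OF star_copy_inj[OF assms(2)], of x y]
  by (auto simp: non_nbrs_def star_maps_in_verts star_arc_def)

definition copies_at :: "'a set \<Rightarrow> ('a \<Rightarrow> 'a \<Rightarrow> bool) \<Rightarrow> nat \<Rightarrow> nat \<Rightarrow> nat \<Rightarrow> 'a \<Rightarrow> (nat \<Rightarrow> 'a) set" where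
  "copies_at V Arc k l x v = {\<phi> \<in> star_maps k l V. is_star_copy Arc k l \<phi> \<and> \<phi> x = v}"

lemma card_copies_at_centre_le:
  assumes "digraph V Arc" "4 \<le> k + l"
  shows "real (card (copies_at V Arc k l 0 v))
    \<le> star_coeff k l * max 0 (real (card (nbrs V Arc v)) - 1) ^ (k + l)"
proof -
  have fin: "finite V"
    using assms(1) by (simp add: digraph_def)
  have "card (copies_at V Arc k l 0 v)
      \<le> falling (card (out_only_nbrs V Arc v)) (card {1..k}) * falling (card (in_only_nbrs V Arc v)) (card {k+1..k+l})"
  proof (rule card_le_falling_mult_falling[where h = "\<lambda>z. if z = 0 then v else undefined"])
    fix \<phi> z
    assume "\<phi> \<in> copies_at V Arc k l 0 v" "z \<notin> {1..k} \<union> {k+1..k+l}"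
    then show "\<phi> z = (if z = 0 then v else undefined)"
      by (cases "z = 0") (auto simp: copies_at_def intro: star_maps_undefined)
  next
    show "inj_on \<phi> ({1..k} \<union> {k+1..k+l})" if "\<phi> \<in> copies_at V Arc k l 0 v" for \<phi>
      using that by (auto simp: copies_at_def intro: inj_on_subset[OF star_copy_inj])
  next
    show "\<phi> ` {1..k} \<subseteq> out_only_nbrs V Arc v" if "\<phi> \<in> copies_at V Arc k l 0 v" for \<phi>
      using that star_copy_out_leaf[of \<phi> k l V Arc] by (auto simp: copies_at_def)
  next
    show "\<phi> ` {k+1..k+l} \<subseteq> in_only_nbrs V Arc v" if "\<phi> \<in> copies_at V Arc k l 0 v" for \<phi>
      using that star_copy_in_leaf[of \<phi> k l V Arc] by (auto simp: copies_at_def)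
  qed (use fin in \<open>simp_all add: out_only_nbrs_def in_only_nbrs_def\<close>)
  then have "real (card (copies_at V Arc k l 0 v))
      \<le> real (falling (card (out_only_nbrs V Arc v)) k * falling (card (in_only_nbrs V Arc v)) l)"
    by (simp del: of_nat_mult)
  also have "\<dots> \<le> star_coeff k l * max 0 (real (card (nbrs V Arc v)) - 1) ^ (k + l)"
    using assms(2) card_out_only_plus_in_only_le[OF fin, of Arc v] by (intro falling_mult_falling_le) auto
  finally show ?thesis .
qed

lemma card_copies_at_leaf_centre_le:
  assumes "finite V" "x \<in> {1..k+l}"
  shows "card {\<phi> \<in> copies_at V Arc k l x v. \<phi> 0 = c}
    \<le> falling (card (out_only_nbrs (non_nbrs V Arc v) Arc c)) (card ({1..k} - {x}))
      * falling (card (in_only_nbrs (non_nbrs V Arc v) Arc c)) (card ({k+1..k+l} - {x}))"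
proof (rule card_le_falling_mult_falling[where h = "\<lambda>z. if z = 0 then c else if z = x then v else undefined"])
  fix \<phi> assume "\<phi> \<in> {\<phi> \<in> copies_at V Arc k l x v. \<phi> 0 = c}"
  then have \<phi>: "\<phi> \<in> star_maps k l V" "is_star_copy Arc k l \<phi>" "\<phi> x = v" "\<phi> 0 = c"
    by (simp_all add: copies_at_def)
  show "\<phi> z = (if z = 0 then c else if z = x then v else undefined)"
    if "z \<notin> ({1..k} - {x}) \<union> ({k+1..k+l} - {x})" for z
  proof -
    have "z = 0 \<or> z = x \<or> k + l < z"
      using that by auto
    then show ?thesis
      using \<phi> assms(2) star_maps_undefined[OF \<phi>(1), of z] by auto
  qed
  show "inj_on \<phi> (({1..k} - {x}) \<union> ({k+1..k+l} - {x}))"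
    using star_copy_inj[OF \<phi>(2)] by (rule inj_on_subset) auto
  show "\<phi> ` ({1..k} - {x}) \<subseteq> out_only_nbrs (non_nbrs V Arc v) Arc c"
  proof (rule image_subsetI)
    fix y assume "y \<in> {1..k} - {x}"
    then have "\<phi> y \<in> out_only_nbrs V Arc (\<phi> 0)" "\<phi> y \<in> non_nbrs V Arc (\<phi> x)"
      using assms(2) star_copy_out_leaf[OF \<phi>(1,2)] star_copy_leaf_non_nbr[OF \<phi>(1,2)] by auto
    then show "\<phi> y \<in> out_only_nbrs (non_nbrs V Arc v) Arc c"
      using \<phi>(3,4) by (simp add: out_only_nbrs_def)
  qed
  show "\<phi> ` ({k+1..k+l} - {x}) \<subseteq> in_only_nbrs (non_nbrs V Arc v) Arc c"
  proof (rule image_subsetI)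
    fix y assume "y \<in> {k+1..k+l} - {x}"
    then have "\<phi> y \<in> in_only_nbrs V Arc (\<phi> 0)" "\<phi> y \<in> non_nbrs V Arc (\<phi> x)"
      using assms(2) star_copy_in_leaf[OF \<phi>(1,2)] star_copy_leaf_non_nbr[OF \<phi>(1,2)] by auto
    then show "\<phi> y \<in> in_only_nbrs (non_nbrs V Arc v) Arc c"
      using \<phi>(3,4) by (simp add: in_only_nbrs_def)
  qed
qed (use assms(1) in \<open>simp_all add: out_only_nbrs_def in_only_nbrs_def non_nbrs_def\<close>)

lemma card_copies_at_leaf_le:
  assumes "digraph V Arc" "v \<in> V" "x \<in> {1..k+l}"
    and centre: "\<And>\<phi>. \<phi> \<in> copies_at V Arc k l x v \<Longrightarrow> \<phi> 0 \<in> C" and "finite C"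
    and a: "card ({1..k} - {x}) = a" and b: "card ({k+1..k+l} - {x}) = b" and "4 \<le> a + b"
  shows "real (card (copies_at V Arc k l x v))
    \<le> real (card C) * (star_coeff a b * max 0 (real (card V) - real (card (nbrs V Arc v)) - 2) ^ (a + b))"
proof -
  define W where "W = max 0 (real (card V) - real (card (nbrs V Arc v)) - 2)"
  define T where "T c = {\<phi> \<in> copies_at V Arc k l x v. \<phi> 0 = c}" for c
  have fin: "finite V"
    using assms(1) by (simp add: digraph_def)
  have per_centre: "real (card (T c)) \<le> star_coeff a b * W ^ (a + b)" for c
  proof -
    let ?U = "non_nbrs V Arc v"
    have "card (out_only_nbrs ?U Arc c) + card (in_only_nbrs ?U Arc c) \<le> card (nbrs ?U Arc c)"
      using fin by (intro card_out_only_plus_in_only_le) (simp add: non_nbrs_def)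
    also have "\<dots> \<le> card ?U"
      using fin by (intro card_mono) (auto simp: nbrs_def non_nbrs_def)
    finally have sum_le: "real (card (out_only_nbrs ?U Arc c)) + real (card (in_only_nbrs ?U Arc c)) - 1 \<le> W"
      using card_non_nbrs_plus_nbrs[OF assms(1,2)] unfolding W_def by linarith
    have "card (T c) \<le> falling (card (out_only_nbrs ?U Arc c)) a * falling (card (in_only_nbrs ?U Arc c)) b"
      using card_copies_at_leaf_centre_le[OF fin assms(3), of Arc v c] unfolding a b T_def .
    then have "real (card (T c))
        \<le> real (falling (card (out_only_nbrs ?U Arc c)) a * falling (card (in_only_nbrs ?U Arc c)) b)"
      by (simp only: of_nat_le_iff)
    also have "\<dots> \<le> star_coeff a b * W ^ (a + b)"
      using \<open>4 \<le> a + b\<close> sum_le by (intro falling_mult_falling_le) (auto simp: W_def)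
    finally show ?thesis .
  qed
  have "copies_at V Arc k l x v = (\<Union>c\<in>C. T c)"
    using centre by (auto simp: T_def)
  then have "card (copies_at V Arc k l x v) \<le> (\<Sum>c\<in>C. card (T c))"
    using card_UN_le[OF \<open>finite C\<close>, of T] by simp
  then have "real (card (copies_at V Arc k l x v)) \<le> (\<Sum>c\<in>C. real (card (T c)))"
    by (simp only: of_nat_le_iff of_nat_sum[symmetric])
  also have "\<dots> \<le> real (card C) * (star_coeff a b * W ^ (a + b))"
    using per_centre by (intro sum_bounded_above)
  finally show ?thesis
    unfolding W_def .
qed

lemma card_star_maps_hitting_ge:
  assumes "finite V" "v \<in> V"
  shows "(k + l + 1) * (card V - 1) ^ (k + l) \<le> card {\<phi> \<in> star_maps k l V. v \<in> \<phi> ` star_verts k l}"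
proof -
  let ?S = "star_verts k l"
  define E where "E x = PiE ?S (\<lambda>y. if y = x then {v} else V - {v})" for x
  have finS: "finite ?S" and cardS: "card ?S = k + l + 1"
    by (simp_all add: star_verts_def)
  have card_E: "card (E x) = (card V - 1) ^ (k + l)" if "x \<in> ?S" for x
  proof -
    have "card (E x) = (\<Prod>y\<in>?S. card (if y = x then {v} else V - {v}))"
      unfolding E_def using finS by (rule card_PiE)
    also have "\<dots> = (\<Prod>y\<in>?S - {x}. card (V - {v}))"
      using finS that by (simp add: prod.remove)
    also have "\<dots> = (card V - 1) ^ (k + l)"
      using assms finS that cardS by simp
    finally show ?thesis .
  qed
  have "(\<Union>x\<in>?S. E x) \<subseteq> {\<phi> \<in> star_maps k l V. v \<in> \<phi> ` ?S}"
  proof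
    fix \<phi> assume "\<phi> \<in> (\<Union>x\<in>?S. E x)"
    then obtain x where "x \<in> ?S" "\<phi> \<in> E x"
      by blast
    then have "\<phi> x = v" "\<phi> \<in> star_maps k l V"
      using assms(2) by (auto simp: E_def star_maps_def PiE_iff split: if_splits)
    then show "\<phi> \<in> {\<phi> \<in> star_maps k l V. v \<in> \<phi> ` ?S}"
      using \<open>x \<in> ?S\<close> by force
  qed
  moreover have "finite {\<phi> \<in> star_maps k l V. v \<in> \<phi> ` ?S}"
    using finite_star_maps[OF assms(1)] by simp
  ultimately have "card (\<Union>x\<in>?S. E x) \<le> card {\<phi> \<in> star_maps k l V. v \<in> \<phi> ` ?S}"
    by (rule card_mono[rotated])
  moreover have "card (\<Union>x\<in>?S. E x) = (\<Sum>x\<in>?S. card (E x))"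
  proof (rule card_UN_disjoint[OF finS])
    show "\<forall>x\<in>?S. finite (E x)"
      using assms(1) finS by (simp add: E_def finite_PiE)
    show "\<forall>x\<in>?S. \<forall>y\<in>?S. x \<noteq> y \<longrightarrow> E x \<inter> E y = {}"
    proof (intro ballI impI)
      fix x y assume "x \<in> ?S" "y \<in> ?S" "x \<noteq> y"
      have "\<phi> x = v" "\<phi> x \<in> V - {v}" if "\<phi> \<in> E x" "\<phi> \<in> E y" for \<phi>
        using that \<open>x \<in> ?S\<close> \<open>x \<noteq> y\<close> by (auto simp: E_def dest: PiE_mem)
      then show "E x \<inter> E y = {}"
        by blast
    qed
  qed
  ultimately show ?thesis
    using card_E cardS by simp
qed

lemma card_copies_through_le_sum:
  assumes "finite V"
  shows "card {\<phi> \<in> star_maps k l V. is_star_copy Arc k l \<phi> \<and> v \<in> \<phi> ` star_verts k l}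
    \<le> (\<Sum>x\<le>k+l. card (copies_at V Arc k l x v))"
proof -
  have "{\<phi> \<in> star_maps k l V. is_star_copy Arc k l \<phi> \<and> v \<in> \<phi> ` star_verts k l}
      \<subseteq> (\<Union>x\<le>k+l. copies_at V Arc k l x v)"
    by (auto simp: copies_at_def star_verts_def)
  then have "card {\<phi> \<in> star_maps k l V. is_star_copy Arc k l \<phi> \<and> v \<in> \<phi> ` star_verts k l}
      \<le> card (\<Union>x\<le>k+l. copies_at V Arc k l x v)"
    using finite_star_maps[OF assms] by (intro card_mono) (auto simp: copies_at_def)
  also have "\<dots> \<le> (\<Sum>x\<le>k+l. card (copies_at V Arc k l x v))"
    by (rule card_UN_le) simp
  finally show ?thesis .
qed

lemma card_copies_through_le:
  assumes G: "digraph V Arc" "v \<in> V" and kl: "1 \<le> l" "l \<le> k" "5 \<le> k + l"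
  defines "d \<equiv> real (card (nbrs V Arc v))"
  defines "W \<equiv> max 0 (real (card V) - d - 2) ^ (k + l - 1)"
  shows "real (card {\<phi> \<in> star_maps k l V. is_star_copy Arc k l \<phi> \<and> v \<in> \<phi> ` star_verts k l})
    \<le> lambda0 k l * max 0 (d - 1) ^ (k + l) + d * lambda1 k l * W"
proof -
  let ?c = "\<lambda>x. real (card (copies_at V Arc k l x v))"
  let ?A = "out_only_nbrs V Arc v" and ?B = "in_only_nbrs V Arc v"
  have fin: "finite V"
    using G(1) by (simp add: digraph_def)
  have centre: "?c 0 \<le> lambda0 k l * max 0 (d - 1) ^ (k + l)"
    using card_copies_at_centre_le[OF G(1)] kl by (simp add: d_def lambda0_eq_star_coeff)
  have out_leaf: "?c x \<le> real (card ?B) * (star_coeff (k - 1) l * W)" if "x \<in> {1..k}" for x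
  proof -
    have "\<phi> 0 \<in> ?B" if "\<phi> \<in> copies_at V Arc k l x v" for \<phi>
      using that star_copy_out_leaf[of \<phi> k l V Arc x] star_maps_in_verts[of \<phi> k l V 0] \<open>x \<in> {1..k}\<close>
      by (simp add: copies_at_def out_only_nbrs_def in_only_nbrs_def)
    moreover have "k - 1 + l = k + l - 1"
      using kl by simp
    ultimately show ?thesis
      using card_copies_at_leaf_le[OF G, of x k l ?B "k - 1" l] that fin kl
      by (simp add: W_def d_def in_only_nbrs_def)
  qed
  have in_leaf: "?c x \<le> real (card ?A) * (star_coeff k (l - 1) * W)" if "x \<in> {k+1..k+l}" for x
  proof -
    have "\<phi> 0 \<in> ?A" if "\<phi> \<in> copies_at V Arc k l x v" for \<phi>
      using that star_copy_in_leaf[of \<phi> k l V Arc x] star_maps_in_verts[of \<phi> k l V 0] \<open>x \<in> {k+1..k+l}\<close>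
      by (simp add: copies_at_def out_only_nbrs_def in_only_nbrs_def)
    moreover have "k + (l - 1) = k + l - 1"
      using kl by simp
    ultimately show ?thesis
      using card_copies_at_leaf_le[OF G, of x k l ?A k "l - 1"] that fin kl
      by (simp add: W_def d_def out_only_nbrs_def)
  qed
  have "real (card {\<phi> \<in> star_maps k l V. is_star_copy Arc k l \<phi> \<and> v \<in> \<phi> ` star_verts k l})
      \<le> real (\<Sum>x\<le>k+l. card (copies_at V Arc k l x v))"
    using card_copies_through_le_sum[OF fin] by (simp only: of_nat_le_iff)
  also have "\<dots> = ?c 0 + (\<Sum>x\<in>{1..k}. ?c x) + (\<Sum>x\<in>{k+1..k+l}. ?c x)"
  proof -
    have "{..k + l} = insert 0 ({1..k} \<union> {k+1..k+l})"
      by auto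
    then show ?thesis
      by (simp add: sum.union_disjoint)
  qed
  also have "\<dots> \<le> lambda0 k l * max 0 (d - 1) ^ (k + l)
      + real k * (real (card ?B) * (star_coeff (k - 1) l * W))
      + real l * (real (card ?A) * (star_coeff k (l - 1) * W))"
    using sum_bounded_above[of "{1..k}" ?c] sum_bounded_above[of "{k+1..k+l}" ?c] out_leaf in_leaf centre
    by (intro add_mono) auto
  also have "\<dots> \<le> lambda0 k l * max 0 (d - 1) ^ (k + l)
      + (real (card ?B) * lambda1 k l * W + real (card ?A) * lambda1 k l * W)"
  proof -
    have "real k * star_coeff (k - 1) l \<le> lambda1 k l"
      using star_coeff_shift_le[OF kl(1,2)] lambda1_eq_star_coeff[OF kl(1)] by simp
    then have "real k * star_coeff (k - 1) l * (real (card ?B) * W) \<le> lambda1 k l * (real (card ?B) * W)"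
      by (rule mult_right_mono) (simp add: W_def)
    then have "real k * (real (card ?B) * (star_coeff (k - 1) l * W)) \<le> real (card ?B) * lambda1 k l * W"
      by (simp add: algebra_simps)
    moreover have "real l * (real (card ?A) * (star_coeff k (l - 1) * W)) = real (card ?A) * lambda1 k l * W"
      using lambda1_eq_star_coeff[OF kl(1)] by simp
    ultimately show ?thesis
      by linarith
  qed
  also have "\<dots> \<le> lambda0 k l * max 0 (d - 1) ^ (k + l) + d * lambda1 k l * W"
  proof -
    have "real (card ?A) + real (card ?B) \<le> d"
      using card_out_only_plus_in_only_le[OF fin, of Arc v] by (simp add: d_def)
    then have "(real (card ?A) + real (card ?B)) * (lambda1 k l * W) \<le> d * (lambda1 k l * W)"
      by (rule mult_right_mono) (simp add: W_def lambda1_def)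
    then show ?thesis
      by (simp add: algebra_simps)
  qed
  finally show ?thesis .
qed

theorem claim4p1:
  fixes V :: "'a set" and Arc :: "'a \<Rightarrow> 'a \<Rightarrow> bool" and k l :: nat and v :: 'a
  assumes "digraph V Arc"
    and "k \<ge> l" and "l \<ge> 1" and "k + l \<ge> 6"
    and "v \<in> V"
  shows "s_val V Arc k l v \<le>
    1 / real (k + l + 1) *
      (lambda0 k l * rho V Arc v ^ (k + l)
       + lambda1 k l * rho V Arc v * (1 - rho V Arc v) ^ (k + l - 1))"
proof -
  define n where "n = card V"
  define d where "d = card (nbrs V Arc v)"
  have fin: "finite V"
    using assms(1) by (simp add: digraph_def)
  have "d + 1 \<le> n"
    using card_non_nbrs_plus_nbrs[OF assms(1,5)] by (simp add: n_def d_def)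
  have "(k + l + 1) * (n - 1) ^ (k + l) \<le> card {\<phi> \<in> star_maps k l V. v \<in> \<phi> ` star_verts k l}"
    unfolding n_def by (rule card_star_maps_hitting_ge[OF fin assms(5)])
  moreover have "real ((k + l + 1) * (n - 1) ^ (k + l)) = real (k + l + 1) * (real n - 1) ^ (k + l)"
    using \<open>d + 1 \<le> n\<close> by (simp only: of_nat_mult of_nat_power) (simp add: of_nat_diff)
  ultimately have den: "real (k + l + 1) * (real n - 1) ^ (k + l)
      \<le> real (card {\<phi> \<in> star_maps k l V. v \<in> \<phi> ` star_verts k l})"
    by (metis of_nat_mono)
  have "s_val V Arc k l v \<le> 1 / real (k + l + 1) *
      (lambda0 k l * (d / n) ^ (k + l) + lambda1 k l * (d / n) * (1 - d / n) ^ (k + l - 1))"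
    unfolding s_val_def
  proof (rule ratio_le_star_density[OF _ _ _ _ _ _ _ den])
    show "real (card {\<phi> \<in> star_maps k l V. is_star_copy Arc k l \<phi> \<and> v \<in> \<phi> ` star_verts k l})
      \<le> lambda0 k l * max 0 (real d - 1) ^ (k + l)
        + real d * lambda1 k l * max 0 (real n - real d - 2) ^ (k + l - 1)"
      using card_copies_through_le[OF assms(1,5,3,2)] assms(4) by (simp add: n_def d_def)
  qed (use \<open>d + 1 \<le> n\<close> assms(4) in \<open>simp_all add: lambda0_def lambda1_def\<close>)
  then show ?thesis
    by (simp add: rho_def nbrs_def n_def d_def)
qed

end
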